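(* Let $m\ge1$. The set $\mathbb{T}[[t_1,\ldots,t_m]]$, equipped with the operations $S\oplus T=\operatorname{Vert}(S\cup T)$ and $S\odot T=\operatorname{Vert}(S+T)$ (Minkowski sum), is a commutative idempotent semiring with zero element $\emptyset$ and unit element $\{(0,\ldots,0)\}$.
   Context: For $X\subseteq \mathbb{Z}_{\geq0}^m$, the Newton polygon $\mathcal{N}(X)\subseteq\mathbb{R}_{\geq0}^m$ is the convex hull (in $\mathbb{R}^m$) of $X+\mathbb{Z}_{\geq0}^m$. An element $x\in X$ is a vertex of $X$ if $x\notin\mathcal{N}(X\setminus\{x\})$, and $\operatorname{Vert}(X)$ denotes the set of vertices of $X$. The map $\operatorname{Vert}$ on the power set $\mathcal{P}(\mathbb{Z}_{\ge0}^m)$ satisfies $\operatorname{Vert}\circ\operatorname{Vert}=\operatorname{Vert}$, and $\mathbb{T}[[t_1,\ldots,t_m]]$ denotes its image $\{\operatorname{Vert}(X): X\subseteq\mathbb{Z}_{\ge0}^m\}$ (the set of vertex sets). A commutative semiring is a tuple $(S,+,\times,0,1)$ with $(S,+,0)$, $(S,\times,1)$ commutative monoids, $\times$ distributing over $+$, and $0\times a=0$; it is idempotent if $a+a=a$ for all $a$. *)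

theory Defs
  imports "HOL-Analysis.Analysis" "HOL-Algebra.Ring"
begin

text \<open>Exponent vectors in Z_{>=0}^m are represented as nat ^ 'm, where the finite
  index type 'm has m = CARD('m) >= 1 elements.  They are embedded in R^m = real ^ 'm.\<close>

definition to_real :: "nat ^ 'm \<Rightarrow> real ^ 'm" where
  "to_real x = (\<chi> i. real (x $ i))"

definition newton :: "(nat ^ 'm) set \<Rightarrow> (real ^ 'm) set" where
  "newton X = convex hull (to_real ` {x + y | x y. x \<in> X})"

definition Vert :: "(nat ^ 'm) set \<Rightarrow> (nat ^ 'm) set" where
  "Vert X = {x \<in> X. to_real x \<notin> newton (X - {x})}"

definition TPS :: "(nat ^ 'm) set set" where
  "TPS = range Vert"

definition minkowski :: "(nat ^ 'm) set \<Rightarrow> (nat ^ 'm) set \<Rightarrow> (nat ^ 'm) set" where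
  "minkowski S T = {s + t | s t. s \<in> S \<and> t \<in> T}"

definition tplus :: "(nat ^ 'm) set \<Rightarrow> (nat ^ 'm) set \<Rightarrow> (nat ^ 'm) set" where
  "tplus S T = Vert (S \<union> T)"

definition ttimes :: "(nat ^ 'm) set \<Rightarrow> (nat ^ 'm) set \<Rightarrow> (nat ^ 'm) set" where
  "ttimes S T = Vert (minkowski S T)"

definition TPS_semiring :: "((nat ^ 'm) set) ring" where
  "TPS_semiring = \<lparr>carrier = TPS, monoid.mult = ttimes, one = {0},
                   zero = {}, add = tplus\<rparr>"

end

theory Submission
  imports Defs
begin

text \<open>
  Everything hinges on the fact that \<open>Vert\<close> only sees the Newton polygon: \<open>x\<close> is a vertex
  of \<open>X\<close> iff \<open>to_real x\<close> is an extreme point of \<open>newton X\<close>.  Newton polygons take unions to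
  convex hulls of unions and Minkowski sums to Minkowski sums, and \<open>newton (Vert X) = newton X\<close>:
  by Dickson's lemma some finite subset of \<open>X\<close> has the same Newton polygon, and from a finite set
  the non-vertices can be discarded one at a time.  Consequently \<open>Vert (Vert S \<union> T) = Vert (S \<union> T)\<close>
  and \<open>Vert (Vert S + T) = Vert (S + T)\<close>, so the semiring laws of \<open>\<oplus>\<close> and \<open>\<odot>\<close> are inherited
  from those of union and Minkowski sum.
\<close>

section \<open>Extreme points in ordered real vector spaces\<close>

lemma convex_combination_ge_eq:
  fixes x a b :: "'a::ordered_real_vector"
  assumes "x \<le> a" "x \<le> b" "0 < t" "t < 1" "x = (1 - t) *\<^sub>R a + t *\<^sub>R b"
  shows "a = x"
proof -
  have "(1 - t) *\<^sub>R (a - x) + t *\<^sub>R (b - x) = 0"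
    using assms(5) by (simp add: algebra_simps)
  moreover have "0 \<le> (1 - t) *\<^sub>R (a - x)" "0 \<le> t *\<^sub>R (b - x)"
    using assms(1-4) by (simp_all add: scaleR_nonneg_nonneg)
  ultimately have "(1 - t) *\<^sub>R (a - x) = 0"
    by (simp add: add_nonneg_eq_0_iff)
  then show ?thesis using assms(4) by simp
qed

lemma upward_closed_absorb:
  fixes x s w :: "'a::ordered_real_vector"
  assumes up: "\<And>u v. u \<in> U \<Longrightarrow> u \<le> v \<Longrightarrow> v \<in> U"
    and "s \<in> U" "0 < c" "0 \<le> w" "x = c *\<^sub>R s + (1 - c) *\<^sub>R x + w"
  shows "x \<in> U"
proof -
  have "c *\<^sub>R x = c *\<^sub>R s + w"
    using assms(5) by (simp add: algebra_simps)
  have "x = (1 / c) *\<^sub>R (c *\<^sub>R x)"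
    using assms(3) by simp
  also have "\<dots> = s + (1 / c) *\<^sub>R w"
    using assms(3) \<open>c *\<^sub>R x = c *\<^sub>R s + w\<close> by (simp add: scaleR_add_right)
  finally have "x = s + (1 / c) *\<^sub>R w" .
  moreover have "s \<le> s + (1 / c) *\<^sub>R w"
    using assms(3,4) by (simp add: scaleR_nonneg_nonneg)
  ultimately show ?thesis using up[OF assms(2)] by simp
qed

lemma convex_atLeast:
  fixes x :: "'a::ordered_real_vector"
  shows "convex {x..}"
proof (rule convexI)
  fix a b :: 'a and u v :: real
  assume "a \<in> {x..}" "b \<in> {x..}" "0 \<le> u" "0 \<le> v" "u + v = 1"
  then have "u *\<^sub>R x + v *\<^sub>R x \<le> u *\<^sub>R a + v *\<^sub>R b"
    by (intro add_mono scaleR_left_mono) auto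
  then show "u *\<^sub>R a + v *\<^sub>R b \<in> {x..}"
    using \<open>u + v = 1\<close> by (simp flip: scaleR_left_distrib)
qed

lemma singleton_plus_atLeast_zero:
  fixes a :: "'a::ordered_ab_group_add"
  shows "{a} + {0..} = {a..}"
proof (intro equalityI subsetI)
  fix q assume "q \<in> {a} + {0..}"
  then show "q \<in> {a..}" by (auto simp: set_plus_def)
next
  fix q assume "q \<in> {a..}"
  then have "q - a \<in> {0..}" by simp
  from set_plus_intro[OF singletonI[of a] this] show "q \<in> {a} + {0..}" by simp
qed

lemma set_plus_atLeast_zero_upward:
  fixes p q :: "'a::ordered_ab_group_add"
  assumes "p \<in> S + {0..}" "p \<le> q"
  shows "q \<in> S + {0..}"
proof -
  obtain s where "s \<in> S" "p \<in> {s} + {0..}"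
    using assms(1) by (auto simp: set_plus_def)
  then have "q \<in> {s} + {0..}"
    using assms(2) by (simp add: singleton_plus_atLeast_zero)
  then show ?thesis
    using \<open>s \<in> S\<close> by (auto simp: set_plus_def)
qed

lemma extreme_point_ofI:
  fixes x :: "'a::real_vector"
  assumes "x \<in> C"
    and "\<And>a b t. a \<in> C \<Longrightarrow> b \<in> C \<Longrightarrow> 0 < t \<Longrightarrow> t < 1 \<Longrightarrow> x = (1 - t) *\<^sub>R a + t *\<^sub>R b \<Longrightarrow> a = x"
  shows "x extreme_point_of C"
  unfolding extreme_point_of_def
proof (intro conjI ballI notI)
  fix a b assume "a \<in> C" "b \<in> C" "x \<in> open_segment a b"
  then obtain t where "0 < t" "t < 1" "x = (1 - t) *\<^sub>R a + t *\<^sub>R b"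
    by (auto simp: in_segment)
  then have "a = x" using assms(2) \<open>a \<in> C\<close> \<open>b \<in> C\<close> by blast
  then show False using \<open>x \<in> open_segment a b\<close> by (simp add: open_segment_def)
qed (fact assms(1))

lemma convex_hull_Un_atLeastE:
  fixes x :: "'a::ordered_euclidean_space"
  assumes "convex U" "U \<noteq> {}" "c \<in> convex hull (U \<union> {x..})"
  obtains \<alpha> s w where "0 \<le> \<alpha>" "\<alpha> \<le> 1" "s \<in> U" "0 \<le> w"
    "c = \<alpha> *\<^sub>R s + (1 - \<alpha>) *\<^sub>R x + w"
proof -
  have "convex hull (U \<union> {x..}) =
      {u *\<^sub>R s + v *\<^sub>R y | u v s y. 0 \<le> u \<and> 0 \<le> v \<and> u + v = 1 \<and> s \<in> U \<and> y \<in> {x..}}"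
    using assms(1,2) convex_atLeast by (intro convex_hull_union_two) auto
  then obtain \<alpha> \<beta> s y where "0 \<le> \<alpha>" "0 \<le> \<beta>" "\<alpha> + \<beta> = 1" "s \<in> U" "x \<le> y"
    and c: "c = \<alpha> *\<^sub>R s + \<beta> *\<^sub>R y"
    using assms(3) by auto
  then have c': "c = \<alpha> *\<^sub>R s + (1 - \<alpha>) *\<^sub>R y" by (simp flip: eq_diff_eq')
  have "c = \<alpha> *\<^sub>R s + (1 - \<alpha>) *\<^sub>R x + (1 - \<alpha>) *\<^sub>R (y - x)"
    unfolding c' by (simp add: algebra_simps)
  moreover have "0 \<le> (1 - \<alpha>) *\<^sub>R (y - x)"
    using \<open>0 \<le> \<beta>\<close> \<open>\<alpha> + \<beta> = 1\<close> \<open>x \<le> y\<close> by (simp add: scaleR_nonneg_nonneg)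
  moreover have "\<alpha> \<le> 1" using \<open>0 \<le> \<beta>\<close> \<open>\<alpha> + \<beta> = 1\<close> by simp
  ultimately show thesis
    using that \<open>0 \<le> \<alpha>\<close> \<open>s \<in> U\<close> by blast
qed

lemma convex_combination_Un_atLeastE:
  fixes x :: "'a::ordered_real_vector"
  assumes U: "convex U" and "s\<^sub>1 \<in> U" "s\<^sub>2 \<in> U" "0 \<le> w\<^sub>1" "0 \<le> w\<^sub>2"
    and "0 \<le> \<alpha>\<^sub>1" "0 \<le> \<alpha>\<^sub>2" "0 \<le> t" "t \<le> 1"
    and \<beta>: "\<beta> = (1 - t) * \<alpha>\<^sub>1 + t * \<alpha>\<^sub>2" "0 < \<beta>"
  obtains s w where "s \<in> U" "0 \<le> w"
    "(1 - t) *\<^sub>R (\<alpha>\<^sub>1 *\<^sub>R s\<^sub>1 + (1 - \<alpha>\<^sub>1) *\<^sub>R x + w\<^sub>1) + t *\<^sub>R (\<alpha>\<^sub>2 *\<^sub>R s\<^sub>2 + (1 - \<alpha>\<^sub>2) *\<^sub>R x + w\<^sub>2)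
      = \<beta> *\<^sub>R s + (1 - \<beta>) *\<^sub>R x + w"
proof
  let ?s = "((1 - t) * \<alpha>\<^sub>1 / \<beta>) *\<^sub>R s\<^sub>1 + (t * \<alpha>\<^sub>2 / \<beta>) *\<^sub>R s\<^sub>2"
  have "(1 - t) * \<alpha>\<^sub>1 / \<beta> + t * \<alpha>\<^sub>2 / \<beta> = 1"
    using \<beta> by (simp flip: add_divide_distrib)
  then show "?s \<in> U"
    using assms(2-9) \<open>0 < \<beta>\<close> by (intro convexD[OF U]) simp_all
  show "0 \<le> (1 - t) *\<^sub>R w\<^sub>1 + t *\<^sub>R w\<^sub>2"
    using assms(4,5,8,9) by (simp add: scaleR_nonneg_nonneg)
  have "\<beta> *\<^sub>R ?s = ((1 - t) * \<alpha>\<^sub>1) *\<^sub>R s\<^sub>1 + (t * \<alpha>\<^sub>2) *\<^sub>R s\<^sub>2"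
    using \<open>0 < \<beta>\<close> by (simp add: scaleR_add_right)
  then show "(1 - t) *\<^sub>R (\<alpha>\<^sub>1 *\<^sub>R s\<^sub>1 + (1 - \<alpha>\<^sub>1) *\<^sub>R x + w\<^sub>1) + t *\<^sub>R (\<alpha>\<^sub>2 *\<^sub>R s\<^sub>2 + (1 - \<alpha>\<^sub>2) *\<^sub>R x + w\<^sub>2)
      = \<beta> *\<^sub>R ?s + (1 - \<beta>) *\<^sub>R x + ((1 - t) *\<^sub>R w\<^sub>1 + t *\<^sub>R w\<^sub>2)"
    unfolding \<beta>(1) by (simp add: algebra_simps)
qed

lemma extreme_point_of_convex_hull_Un_atLeast:
  fixes x :: "'a::ordered_euclidean_space"
  assumes U: "convex U" and up: "\<And>u v. u \<in> U \<Longrightarrow> u \<le> v \<Longrightarrow> v \<in> U" and "x \<notin> U"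
  shows "x extreme_point_of convex hull (U \<union> {x..})"
proof (rule extreme_point_ofI)
  let ?C = "convex hull (U \<union> {x..})"
  show "x \<in> ?C" by (simp add: hull_inc)
  fix a b t
  assume "a \<in> ?C" "b \<in> ?C" and t: "0 < t" "t < 1" and x: "x = (1 - t) *\<^sub>R a + t *\<^sub>R b"
  show "a = x"
  proof (cases "U = {}")
    case True
    then have "?C = {x..}" by (simp add: convex_atLeast convex_hull_eq)
    then show ?thesis using convex_combination_ge_eq[OF _ _ t x] \<open>a \<in> ?C\<close> \<open>b \<in> ?C\<close> by auto
  next
    case False
    obtain \<alpha>\<^sub>1 s\<^sub>1 w\<^sub>1 where a: "0 \<le> \<alpha>\<^sub>1" "\<alpha>\<^sub>1 \<le> 1" "s\<^sub>1 \<in> U" "0 \<le> w\<^sub>1"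
      "a = \<alpha>\<^sub>1 *\<^sub>R s\<^sub>1 + (1 - \<alpha>\<^sub>1) *\<^sub>R x + w\<^sub>1"
      using convex_hull_Un_atLeastE[OF U False \<open>a \<in> ?C\<close>] .
    obtain \<alpha>\<^sub>2 s\<^sub>2 w\<^sub>2 where b: "0 \<le> \<alpha>\<^sub>2" "\<alpha>\<^sub>2 \<le> 1" "s\<^sub>2 \<in> U" "0 \<le> w\<^sub>2"
      "b = \<alpha>\<^sub>2 *\<^sub>R s\<^sub>2 + (1 - \<alpha>\<^sub>2) *\<^sub>R x + w\<^sub>2"
      using convex_hull_Un_atLeastE[OF U False \<open>b \<in> ?C\<close>] .
    define \<beta> where "\<beta> = (1 - t) * \<alpha>\<^sub>1 + t * \<alpha>\<^sub>2"
    have "0 \<le> (1 - t) * \<alpha>\<^sub>1" "0 \<le> t * \<alpha>\<^sub>2" using a b t by simp_all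
    \<comment> \<open>If \<open>a\<close> or \<open>b\<close> has positive weight on \<open>U\<close>, so has \<open>x\<close>, forcing \<open>x \<in> U\<close>;
      otherwise \<open>a\<close> and \<open>b\<close> both lie above \<open>x\<close>.\<close>
    show ?thesis
    proof (cases "\<beta> = 0")
      case True
      then have "(1 - t) * \<alpha>\<^sub>1 = 0" "t * \<alpha>\<^sub>2 = 0"
        using \<open>0 \<le> (1 - t) * \<alpha>\<^sub>1\<close> \<open>0 \<le> t * \<alpha>\<^sub>2\<close> unfolding \<beta>_def by linarith+
      then have "\<alpha>\<^sub>1 = 0" "\<alpha>\<^sub>2 = 0" using t by simp_all
      then show ?thesis using convex_combination_ge_eq[OF _ _ t x] a b by simp
    next
      case False
      then have "0 < \<beta>"
        using \<open>0 \<le> (1 - t) * \<alpha>\<^sub>1\<close> \<open>0 \<le> t * \<alpha>\<^sub>2\<close> unfolding \<beta>_def by linarith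
      obtain s w where "s \<in> U" "0 \<le> w"
        and comb: "(1 - t) *\<^sub>R (\<alpha>\<^sub>1 *\<^sub>R s\<^sub>1 + (1 - \<alpha>\<^sub>1) *\<^sub>R x + w\<^sub>1)
            + t *\<^sub>R (\<alpha>\<^sub>2 *\<^sub>R s\<^sub>2 + (1 - \<alpha>\<^sub>2) *\<^sub>R x + w\<^sub>2) = \<beta> *\<^sub>R s + (1 - \<beta>) *\<^sub>R x + w"
        using convex_combination_Un_atLeastE[OF U a(3) b(3) a(4) b(4) a(1) b(1)
            less_imp_le[OF t(1)] less_imp_le[OF t(2)] \<beta>_def \<open>0 < \<beta>\<close>] .
      have "x = \<beta> *\<^sub>R s + (1 - \<beta>) *\<^sub>R x + w"
        using trans[OF x[unfolded a(5) b(5)] comb] .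
      then have "x \<in> U"
        using upward_closed_absorb[where U = U] up \<open>s \<in> U\<close> \<open>0 < \<beta>\<close> \<open>0 \<le> w\<close> by blast
      with \<open>x \<notin> U\<close> show ?thesis by blast
    qed
  qed
qed

lemma UNIV_plus_UNIV: "(UNIV :: 'a::monoid_add set) + UNIV = UNIV"
proof -
  have "x \<in> UNIV + UNIV" for x :: 'a
    using set_plus_intro[of x UNIV 0 UNIV] by simp
  then show ?thesis by auto
qed

lemma to_real_add: "to_real (x + y) = to_real x + to_real y"
  by (simp add: to_real_def vec_eq_iff)

lemma to_real_eq_iff: "to_real x = to_real y \<longleftrightarrow> x = y"
  by (simp add: to_real_def vec_eq_iff)

lemma to_real_image_set_plus: "to_real ` (A + B) = to_real ` A + to_real ` B"
  by (force simp: set_plus_def to_real_add)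

lemma minkowski_eq_set_plus: "minkowski A B = A + B"
  by (auto simp: minkowski_def set_plus_def)

lemma minkowski_commute: "minkowski A B = minkowski B A"
  by (simp add: minkowski_eq_set_plus add.commute)

lemma minkowski_assoc: "minkowski (minkowski A B) C = minkowski A (minkowski B C)"
  by (simp add: minkowski_eq_set_plus add.assoc)

lemma minkowski_Un:
  "minkowski (A \<union> B) C = minkowski A C \<union> minkowski B C"
  "minkowski C (A \<union> B) = minkowski C A \<union> minkowski C B"
  by (simp_all add: minkowski_eq_set_plus Un_set_plus set_plus_Un)

lemma minkowski_empty: "minkowski {} A = {}" "minkowski A {} = {}"
  by (simp_all add: minkowski_eq_set_plus)

section \<open>Newton polygons\<close>

lemma newton_eq: "newton X = convex hull (to_real ` (X + UNIV))"
proof -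
  have "{x + y | x y. x \<in> X} = X + UNIV" by (auto simp: set_plus_def)
  then show ?thesis by (simp add: newton_def)
qed

lemma convex_newton: "convex (newton X)"
  by (simp add: newton_def)

lemma newton_mono: "X \<subseteq> Y \<Longrightarrow> newton X \<subseteq> newton Y"
  unfolding newton_eq by (intro hull_mono image_mono set_plus_mono2) auto

lemma to_real_in_newton: "x \<in> X \<Longrightarrow> to_real (x + n) \<in> newton X"
  unfolding newton_eq by (intro hull_inc imageI set_plus_intro) auto

lemma One_nth: "(One :: real ^ 'n) $ i = 1"
  using inner_sum_left_Basis[where f = "\<lambda>_. 1" and b = "axis i 1 :: real ^ 'n"]
  by (simp add: inner_axis)

lemma convex_hull_range_to_real: "convex hull (range to_real) = {0 :: real ^ 'm ..}"
proof
  show "convex hull (range to_real) \<subseteq> {0..}"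
    by (intro hull_minimal convex_atLeast) (auto simp: to_real_def less_eq_vec_def)
  show "{0..} \<subseteq> convex hull (range (to_real :: nat ^ 'm \<Rightarrow> _))"
  proof
    fix v :: "real ^ 'm" assume "v \<in> {0..}"
    \<comment> \<open>\<open>v / k\<close> lies in the unit cube, whose corners scaled by \<open>k\<close> are lattice points.\<close>
    define k :: nat where "k = nat \<lceil>\<Sum>i\<in>UNIV. v $ i\<rceil> + 1"
    let ?corners = "{c :: real ^ 'm. \<forall>i. c $ i = 0 \<or> c $ i = 1}"
    have "v $ i \<le> real k" for i
    proof -
      have "v $ i \<le> (\<Sum>j\<in>UNIV. v $ j)"
        using \<open>v \<in> {0..}\<close> by (intro member_le_sum) (auto simp: less_eq_vec_def)
      then show ?thesis unfolding k_def by linarith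
    qed
    then have "(1 / real k) *\<^sub>R v \<in> cbox 0 One"
      using \<open>v \<in> {0..}\<close> unfolding mem_box_cart One_nth
      by (auto simp: less_eq_vec_def k_def field_simps)
    also have "cbox 0 One = convex hull ?corners"
      unfolding unit_interval_convex_hull
      by (rule arg_cong[where f = "\<lambda>S. convex hull S"]) (simp add: Basis_vec_def inner_axis)
    finally have "real k *\<^sub>R ((1 / real k) *\<^sub>R v) \<in> scaleR (real k) ` (convex hull ?corners)"
      by (rule imageI)
    then have "v \<in> convex hull (scaleR (real k) ` ?corners)"
      by (simp add: convex_hull_scaling k_def)
    moreover have "scaleR (real k) ` ?corners \<subseteq> range to_real"
    proof
      fix c assume "c \<in> scaleR (real k) ` ?corners"
      then obtain d where "d \<in> ?corners" "c = real k *\<^sub>R d" by blast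
      then have "c = to_real (\<chi> i. if d $ i = 0 then 0 else k)"
        by (auto simp: to_real_def vec_eq_iff)
      then show "c \<in> range to_real" by blast
    qed
    ultimately show "v \<in> convex hull range to_real"
      using hull_mono by blast
  qed
qed

lemma newton_eq_plus_orthant: "newton X = convex hull (to_real ` X) + {0..}"
  by (simp add: newton_eq to_real_image_set_plus convex_hull_set_plus convex_hull_range_to_real)

lemma newton_upward: "p \<in> newton X \<Longrightarrow> p \<le> q \<Longrightarrow> q \<in> newton X"
  unfolding newton_eq_plus_orthant by (rule set_plus_atLeast_zero_upward)

lemma newton_singleton: "newton {x} = {to_real x..}"
  by (simp add: newton_eq_plus_orthant singleton_plus_atLeast_zero)

lemma newton_Un: "newton (A \<union> B) = convex hull (newton A \<union> newton B)"
  by (simp add: newton_eq Un_set_plus image_Un flip: hull_Un_left hull_Un_right)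

lemma newton_minkowski:
  fixes A B :: "(nat ^ 'm) set"
  shows "newton (minkowski A B) = newton A + newton B"
proof -
  have "A + B + UNIV = A + B + (UNIV + UNIV)"
    by (simp only: UNIV_plus_UNIV)
  also have "\<dots> = (A + UNIV) + (B + UNIV)"
    by (simp only: add_ac)
  finally have "A + B + UNIV = (A + UNIV) + (B + UNIV)" .
  then show ?thesis
    by (simp add: newton_eq minkowski_eq_set_plus to_real_image_set_plus convex_hull_set_plus)
qed

lemma newton_eq_convex_hull_remove:
  assumes "x \<in> A"
  shows "newton A = convex hull (newton (A - {x}) \<union> {to_real x..})"
proof -
  have "newton A = newton ((A - {x}) \<union> {x})"
    using assms by (simp add: insert_absorb)
  then show ?thesis by (simp only: newton_Un newton_singleton)
qed

section \<open>Vertices are the extreme points of the Newton polygon\<close>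

lemma extreme_point_of_newton_if_Vert:
  assumes "x \<in> Vert A"
  shows "to_real x extreme_point_of newton A"
proof -
  from assms have "x \<in> A" "to_real x \<notin> newton (A - {x})"
    by (auto simp: Vert_def)
  then show ?thesis
    unfolding newton_eq_convex_hull_remove[OF \<open>x \<in> A\<close>]
    using extreme_point_of_convex_hull_Un_atLeast convex_newton newton_upward by blast
qed

lemma extreme_point_of_newton_shift_eq_0:
  assumes "to_real (y + n) extreme_point_of newton A" "y \<in> A"
  shows "n = 0"
proof (rule ccontr)
  assume "n \<noteq> 0"
  then have "y \<noteq> y + (n + n)"
    by (auto simp: vec_eq_iff)
  then have "to_real y \<noteq> to_real (y + (n + n))"
    by (simp add: to_real_eq_iff)
  moreover have "to_real (y + n) = midpoint (to_real y) (to_real (y + (n + n)))"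
    by (simp add: midpoint_def to_real_def vec_eq_iff field_simps)
  ultimately have "to_real (y + n) \<in> open_segment (to_real y) (to_real (y + (n + n)))"
    by simp
  moreover have "to_real y \<in> newton A" "to_real (y + (n + n)) \<in> newton A"
    using to_real_in_newton[OF assms(2), of 0] to_real_in_newton[OF assms(2), of "n + n"] by simp_all
  ultimately show False
    using assms(1) by (auto simp: extreme_point_of_def)
qed

lemma Vert_if_extreme_point_of_newton:
  assumes e: "to_real x extreme_point_of newton A"
  shows "x \<in> Vert A"
proof -
  have "to_real x \<in> to_real ` (A + UNIV)"
    using e unfolding newton_eq by (rule extreme_point_of_convex_hull)
  then obtain y n where "y \<in> A" "x = y + n"
    by (auto simp: to_real_eq_iff set_plus_def)
  with e have "x \<in> A"
    using extreme_point_of_newton_shift_eq_0[of y n A] by simp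
  have "to_real ` ((A - {x}) + UNIV) \<subseteq> newton A - {to_real x}"
  proof
    fix z assume "z \<in> to_real ` ((A - {x}) + UNIV)"
    then obtain y n where "y \<in> A" "y \<noteq> x" and z: "z = to_real (y + n)"
      by (auto simp: set_plus_def)
    have "z \<noteq> to_real x"
    proof
      assume "z = to_real x"
      then have "x = y + n" using z by (simp add: to_real_eq_iff)
      then show False
        using extreme_point_of_newton_shift_eq_0[of y n A] e \<open>y \<in> A\<close> \<open>y \<noteq> x\<close> by simp
    qed
    then show "z \<in> newton A - {to_real x}"
      using to_real_in_newton[OF \<open>y \<in> A\<close>] z by simp
  qed
  moreover have "convex (newton A - {to_real x})"
    using e convex_newton extreme_point_of_stillconvex by blast
  ultimately have "newton (A - {x}) \<subseteq> newton A - {to_real x}"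
    unfolding newton_eq[of "A - {x}"] by (rule hull_minimal)
  then show ?thesis
    using \<open>x \<in> A\<close> by (auto simp: Vert_def)
qed

lemma Vert_eq_extreme_points: "Vert A = {x. to_real x extreme_point_of newton A}"
  using extreme_point_of_newton_if_Vert Vert_if_extreme_point_of_newton by blast

lemma Vert_cong: "newton A = newton B \<Longrightarrow> Vert A = Vert B"
  by (simp add: Vert_eq_extreme_points)

section \<open>A Newton polygon is spanned by its vertices\<close>

lemma Dickson_lemma_coordinates:
  fixes A :: "(nat ^ 'm) set"
  assumes "finite I"
  shows "\<exists>F \<subseteq> A. finite F \<and> (\<forall>a\<in>A. \<exists>f\<in>F. \<forall>i\<in>I. f $ i \<le> a $ i)"
  using assms
proof (induction I arbitrary: A rule: finite_induct)
  case empty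
  show ?case
  proof (cases "A = {}")
    case False
    then obtain a where "a \<in> A" by blast
    then show ?thesis by (intro exI[of _ "{a}"]) auto
  qed simp
next
  case (insert j I)
  obtain F where F: "F \<subseteq> A" "finite F" "\<forall>a\<in>A. \<exists>f\<in>F. \<forall>i\<in>I. f $ i \<le> a $ i"
    using insert.IH by blast
  \<comment> \<open>\<open>F\<close> covers every \<open>a\<close> with \<open>a $ j \<ge> N\<close>; each of the finitely many slices \<open>a $ j = k < N\<close>
    is covered by a finite set \<open>G k\<close>, by induction.\<close>
  define N where "N = (\<Sum>f\<in>F. f $ j)"
  have "\<forall>k. \<exists>Gk. Gk \<subseteq> {a\<in>A. a $ j = k} \<and> finite Gk
      \<and> (\<forall>a\<in>{a\<in>A. a $ j = k}. \<exists>f\<in>Gk. \<forall>i\<in>I. f $ i \<le> a $ i)"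
    using insert.IH by blast
  from choice[OF this] obtain G where "\<forall>k. G k \<subseteq> {a\<in>A. a $ j = k} \<and> finite (G k)
      \<and> (\<forall>a\<in>{a\<in>A. a $ j = k}. \<exists>f\<in>G k. \<forall>i\<in>I. f $ i \<le> a $ i)"
    by blast
  then have G: "\<And>k. G k \<subseteq> {a\<in>A. a $ j = k}" "\<And>k. finite (G k)"
    "\<And>k a. a \<in> A \<Longrightarrow> a $ j = k \<Longrightarrow> \<exists>f\<in>G k. \<forall>i\<in>I. f $ i \<le> a $ i"
    by blast+
  show ?case
  proof (intro exI[of _ "F \<union> (\<Union>k<N. G k)"] conjI ballI)
    show "F \<union> (\<Union>k<N. G k) \<subseteq> A"
      using F(1) G(1) by blast
    show "finite (F \<union> (\<Union>k<N. G k))"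
      using F(2) G(2) by simp
    fix a assume "a \<in> A"
    show "\<exists>f\<in>F \<union> (\<Union>k<N. G k). \<forall>i\<in>insert j I. f $ i \<le> a $ i"
    proof (cases "a $ j < N")
      case True
      obtain f where "f \<in> G (a $ j)" "\<forall>i\<in>I. f $ i \<le> a $ i"
        using G(3) \<open>a \<in> A\<close> by blast
      moreover have "f $ j = a $ j" using G(1) \<open>f \<in> G (a $ j)\<close> by blast
      ultimately show ?thesis using True by (intro bexI[of _ f]) auto
    next
      case False
      obtain f where "f \<in> F" "\<forall>i\<in>I. f $ i \<le> a $ i"
        using F(3) \<open>a \<in> A\<close> by blast
      moreover have "f $ j \<le> N"
        unfolding N_def using \<open>f \<in> F\<close> F(2) by (intro member_le_sum) auto
      ultimately show ?thesis using False by (intro bexI[of _ f]) auto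
    qed
  qed
qed

lemma Dickson_lemma:
  fixes A :: "(nat ^ 'm) set"
  shows "\<exists>F \<subseteq> A. finite F \<and> (\<forall>a\<in>A. \<exists>f\<in>F. f \<le> a)"
  using Dickson_lemma_coordinates[of UNIV A] by (simp add: less_eq_vec_def)

lemma newton_finite_subset:
  fixes A :: "(nat ^ 'm) set"
  obtains F where "F \<subseteq> A" "finite F" "newton F = newton A"
proof -
  obtain F where F: "F \<subseteq> A" "finite F" "\<forall>a\<in>A. \<exists>f\<in>F. f \<le> a"
    using Dickson_lemma by blast
  have "A + UNIV \<subseteq> F + UNIV"
  proof
    fix z assume "z \<in> A + UNIV"
    then obtain a y where "a \<in> A" "z = a + y" by (auto simp: set_plus_def)
    then obtain f where "f \<in> F" "f \<le> a" using F(3) by blast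
    have "z $ i = (f + ((a - f) + y)) $ i" for i
    proof -
      have "f $ i \<le> a $ i" using \<open>f \<le> a\<close> by (simp add: less_eq_vec_def)
      then show ?thesis using \<open>z = a + y\<close> by simp
    qed
    then have "z = f + ((a - f) + y)" by (simp add: vec_eq_iff)
    then show "z \<in> F + UNIV"
      using \<open>f \<in> F\<close> by (simp add: set_plus_intro)
  qed
  then have "newton A \<subseteq> newton F"
    unfolding newton_eq by (intro hull_mono image_mono)
  with newton_mono[OF F(1)] have "newton F = newton A"
    by blast
  with F(1,2) show thesis
    by (rule that)
qed

lemma Vert_subset: "Vert A \<subseteq> A"
  by (auto simp: Vert_def)

lemma newton_remove_non_Vert:
  assumes "g \<in> A" "g \<notin> Vert A"
  shows "newton (A - {g}) = newton A"
proof -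
  have "to_real g \<in> newton (A - {g})"
    using assms by (simp add: Vert_def)
  then have "{to_real g..} \<subseteq> newton (A - {g})"
    using newton_upward by blast
  then have "newton A = convex hull (newton (A - {g}))"
    by (simp add: newton_eq_convex_hull_remove[OF assms(1)] Un_absorb2)
  also have "\<dots> = newton (A - {g})"
    by (simp add: convex_hull_eq convex_newton)
  finally show ?thesis by simp
qed

lemma newton_Vert_finite: "finite A \<Longrightarrow> newton (Vert A) = newton A"
proof (induction A rule: finite_psubset_induct)
  case (psubset A)
  show ?case
  proof (cases "Vert A = A")
    case False
    then obtain g where "g \<in> A" "g \<notin> Vert A"
      using Vert_subset by blast
    then have "newton (A - {g}) = newton A"
      by (rule newton_remove_non_Vert)
    then have "Vert (A - {g}) = Vert A"
      by (rule Vert_cong)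
    moreover have "newton (Vert (A - {g})) = newton (A - {g})"
      using psubset.IH \<open>g \<in> A\<close> by blast
    ultimately show ?thesis
      using \<open>newton (A - {g}) = newton A\<close> by simp
  qed simp
qed

lemma newton_Vert: "newton (Vert A) = newton A"
proof -
  obtain F where "F \<subseteq> A" "finite F" "newton F = newton A"
    by (rule newton_finite_subset)
  then have "Vert A = Vert F"
    by (intro Vert_cong) simp
  then have "newton (Vert A) = newton F"
    using newton_Vert_finite[OF \<open>finite F\<close>] by simp
  also have "\<dots> = newton A" by fact
  finally show ?thesis .
qed

lemma Vert_Vert: "Vert (Vert A) = Vert A"
  by (rule Vert_cong[OF newton_Vert])

lemma Vert_Un_Vert: "Vert (Vert A \<union> B) = Vert (A \<union> B)" "Vert (A \<union> Vert B) = Vert (A \<union> B)"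
  by (rule Vert_cong; simp add: newton_Un newton_Vert)+

lemma Vert_minkowski_Vert:
  "Vert (minkowski (Vert A) B) = Vert (minkowski A B)"
  "Vert (minkowski A (Vert B)) = Vert (minkowski A B)"
  by (rule Vert_cong; simp add: newton_minkowski newton_Vert)+

section \<open>The semiring of vertex sets\<close>

lemma Vert_empty: "Vert {} = {}"
  by (simp add: Vert_def)

lemma Vert_zero: "Vert {0} = {0}"
  by (auto simp: Vert_def newton_eq)

lemma TPS_semiring_simps [simp]:
  fixes a b :: "(nat ^ 'm) set"
  shows "carrier (TPS_semiring :: ((nat ^ 'm) set) ring) = range Vert"
    and "a \<oplus>\<^bsub>TPS_semiring\<^esub> b = Vert (a \<union> b)"
    and "a \<otimes>\<^bsub>TPS_semiring\<^esub> b = Vert (minkowski a b)"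
    and "\<one>\<^bsub>TPS_semiring :: ((nat ^ 'm) set) ring\<^esub> = {0}"
    and "\<zero>\<^bsub>TPS_semiring :: ((nat ^ 'm) set) ring\<^esub> = {}"
  by (simp_all add: TPS_semiring_def TPS_def tplus_def ttimes_def)

lemma Vert_eq_if_in_carrier_TPS_semiring:
  "a \<in> carrier (TPS_semiring :: ((nat ^ 'm) set) ring) \<Longrightarrow> Vert a = a"
  by (auto simp: Vert_Vert)

lemma comm_monoid_TPS_semiring: "comm_monoid (TPS_semiring :: ((nat ^ 'm) set) ring)"
proof (rule comm_monoidI)
  show "\<one>\<^bsub>TPS_semiring\<^esub> \<in> carrier (TPS_semiring :: ((nat ^ 'm) set) ring)"
    using rangeI[of Vert "{0}"] by (simp add: Vert_zero)
  fix x y z :: "(nat ^ 'm) set"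
  assume "x \<in> carrier TPS_semiring"
  moreover have "minkowski {0} x = x"
    by (simp add: minkowski_eq_set_plus)
  ultimately show "\<one>\<^bsub>TPS_semiring\<^esub> \<otimes>\<^bsub>TPS_semiring\<^esub> x = x"
    using Vert_eq_if_in_carrier_TPS_semiring by simp
  show "x \<otimes>\<^bsub>TPS_semiring\<^esub> y \<in> carrier TPS_semiring"
    by simp
  show "x \<otimes>\<^bsub>TPS_semiring\<^esub> y = y \<otimes>\<^bsub>TPS_semiring\<^esub> x"
    by (simp add: minkowski_commute)
  show "x \<otimes>\<^bsub>TPS_semiring\<^esub> y \<otimes>\<^bsub>TPS_semiring\<^esub> z = x \<otimes>\<^bsub>TPS_semiring\<^esub> (y \<otimes>\<^bsub>TPS_semiring\<^esub> z)"
    by (simp add: Vert_minkowski_Vert minkowski_assoc)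
qed

lemma abelian_monoid_TPS_semiring: "abelian_monoid (TPS_semiring :: ((nat ^ 'm) set) ring)"
proof (rule abelian_monoidI)
  show "\<zero>\<^bsub>TPS_semiring\<^esub> \<in> carrier (TPS_semiring :: ((nat ^ 'm) set) ring)"
    using rangeI[of Vert "{}"] by (simp add: Vert_empty)
  fix x y z :: "(nat ^ 'm) set"
  assume "x \<in> carrier TPS_semiring"
  then show "\<zero>\<^bsub>TPS_semiring\<^esub> \<oplus>\<^bsub>TPS_semiring\<^esub> x = x"
    using Vert_eq_if_in_carrier_TPS_semiring by simp
  show "x \<oplus>\<^bsub>TPS_semiring\<^esub> y \<in> carrier TPS_semiring"
    by simp
  show "x \<oplus>\<^bsub>TPS_semiring\<^esub> y = y \<oplus>\<^bsub>TPS_semiring\<^esub> x"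
    by (simp add: Un_commute)
  show "x \<oplus>\<^bsub>TPS_semiring\<^esub> y \<oplus>\<^bsub>TPS_semiring\<^esub> z = x \<oplus>\<^bsub>TPS_semiring\<^esub> (y \<oplus>\<^bsub>TPS_semiring\<^esub> z)"
    by (simp add: Vert_Un_Vert Un_assoc)
qed

lemma semiring_TPS_semiring: "semiring (TPS_semiring :: ((nat ^ 'm) set) ring)"
proof (intro semiring.intro semiring_axioms.intro abelian_monoid_TPS_semiring
    comm_monoid.axioms(1)[OF comm_monoid_TPS_semiring])
  fix x y z :: "(nat ^ 'm) set"
  show "(x \<oplus>\<^bsub>TPS_semiring\<^esub> y) \<otimes>\<^bsub>TPS_semiring\<^esub> z
      = x \<otimes>\<^bsub>TPS_semiring\<^esub> z \<oplus>\<^bsub>TPS_semiring\<^esub> y \<otimes>\<^bsub>TPS_semiring\<^esub> z"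
    by (simp add: Vert_Un_Vert Vert_minkowski_Vert minkowski_Un)
  show "z \<otimes>\<^bsub>TPS_semiring\<^esub> (x \<oplus>\<^bsub>TPS_semiring\<^esub> y)
      = z \<otimes>\<^bsub>TPS_semiring\<^esub> x \<oplus>\<^bsub>TPS_semiring\<^esub> z \<otimes>\<^bsub>TPS_semiring\<^esub> y"
    by (simp add: Vert_Un_Vert Vert_minkowski_Vert minkowski_Un)
  show "\<zero>\<^bsub>TPS_semiring\<^esub> \<otimes>\<^bsub>TPS_semiring\<^esub> x = \<zero>\<^bsub>TPS_semiring :: ((nat ^ 'm) set) ring\<^esub>"
    "x \<otimes>\<^bsub>TPS_semiring\<^esub> \<zero>\<^bsub>TPS_semiring\<^esub> = \<zero>\<^bsub>TPS_semiring :: ((nat ^ 'm) set) ring\<^esub>"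
    by (simp_all add: minkowski_empty Vert_empty)
qed

lemma add_idem_TPS_semiring:
  fixes a :: "(nat ^ 'm) set"
  assumes "a \<in> carrier TPS_semiring"
  shows "a \<oplus>\<^bsub>TPS_semiring\<^esub> a = a"
  using assms Vert_eq_if_in_carrier_TPS_semiring by simp

theorem mainTheorem5:
  shows "semiring (TPS_semiring :: ((nat ^ 'm) set) ring)
       \<and> comm_monoid (TPS_semiring :: ((nat ^ 'm) set) ring)
       \<and> (\<forall>a \<in> carrier (TPS_semiring :: ((nat ^ 'm) set) ring).
            a \<oplus>\<^bsub>(TPS_semiring :: ((nat ^ 'm) set) ring)\<^esub> a = a)"
  using semiring_TPS_semiring comm_monoid_TPS_semiring add_idem_TPS_semiring by blast

end
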